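(* The compact Riemannian nilmanifold $M=(\Gamma\backslash N,g)$ defined below has completely integrable geodesic flow.
   Context: Let $\mathfrak v$ be a 5-dimensional real inner product space with orthonormal basis $X_i,X_j,Y_i,Y_j,Y_k$ and $\mathfrak z$ a 3-dimensional real inner product space with orthonormal basis $Z_i,Z_j,Z_k$. On $\mathfrak n=\mathfrak v\oplus\mathfrak z$ (orthogonal sum) define a two-step nilpotent Lie bracket $[\,,]$ with $\mathfrak z$ central and $[\mathfrak v,\mathfrak v]\subseteq\mathfrak z$, whose only nonzero brackets of basis vectors (up to antisymmetry) are $[X_i,Y_j]=Z_k$, $[X_i,Y_k]=-Z_j$, $[X_j,Y_i]=-Z_k$, $[X_j,Y_k]=Z_i$. Let $N$ be the simply connected Lie group with Lie algebra $\mathfrak n$, $g$ the left invariant metric given by the inner product on $\mathfrak n$, and $\Gamma=\exp(\mathcal G)$ with $\mathcal G=\mathrm{span}_{\mathbb Z}\{X_i,X_j,Y_i,Y_j,Y_k,\tfrac12 Z_i,\tfrac12 Z_j,\tfrac12 Z_k\}$ (a discrete cocompact subgroup); $M=(\Gamma\backslash N,g)$ carries the induced metric. Completely integrable geodesic flow (Liouville) on an $n$-manifold means: there exist $n$ pairwise Poisson-commuting smooth first integrals of the geodesic flow on $T^*M$ with $df_1\wedge\dots\wedge df_n\neq0$ on an open dense set. *)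

theory Defs
  imports "HOL-Analysis.Analysis"
begin

text \<open>Index type for the orthonormal basis X_i,X_j,Y_i,Y_j,Y_k,Z_i,Z_j,Z_k of n = v + z.\<close>
datatype idx = Xi | Xj | Yi | Yj | Yk | Zi | Zj | Zk

lemma UNIV_idx: "(UNIV :: idx set) = {Xi, Xj, Yi, Yj, Yk, Zi, Zj, Zk}"
  by (auto intro: idx.exhaust)

instance idx :: finite
  by standard (simp add: UNIV_idx)

type_synonym vec8 = "real ^ idx"

definition e :: "idx \<Rightarrow> vec8" where
  "e a = axis a 1"

fun basis_br :: "idx \<Rightarrow> idx \<Rightarrow> vec8" where
  "basis_br Xi Yj = e Zk"
| "basis_br Yj Xi = - e Zk"
| "basis_br Xi Yk = - e Zj"
| "basis_br Yk Xi = e Zj"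
| "basis_br Xj Yi = - e Zk"
| "basis_br Yi Xj = e Zk"
| "basis_br Xj Yk = e Zi"
| "basis_br Yk Xj = - e Zi"
| "basis_br _ _ = 0"

text \<open>Bilinear extension: the Lie bracket of n in the coordinates of the orthonormal basis.\<close>
definition br :: "vec8 \<Rightarrow> vec8 \<Rightarrow> vec8" where
  "br x y = (\<Sum>a\<in>UNIV. \<Sum>b\<in>UNIV. (x $ a * y $ b) *\<^sub>R basis_br a b)"

text \<open>Group law of N in exponential coordinates (BCH for two-step nilpotent).\<close>
definition nmult :: "vec8 \<Rightarrow> vec8 \<Rightarrow> vec8" where
  "nmult x y = x + y + (1/2) *\<^sub>R br x y"

text \<open>The lattice Gamma = exp(G) in exponential coordinates.\<close>
definition Gamma :: "vec8 set" where
  "Gamma = {g. (\<forall>a\<in>{Xi,Xj,Yi,Yj,Yk}. g $ a \<in> \<int>) \<and> (\<forall>a\<in>{Zi,Zj,Zk}. 2 * g $ a \<in> \<int>)}"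

text \<open>Left translation differential: d(L_g)_q v = v + 1/2 [g,v] (independent of q).
  The left-invariant vector field E_a at q is d(L_q)(e_a).\<close>
definition dL :: "vec8 \<Rightarrow> vec8 \<Rightarrow> vec8" where
  "dL g v = v + (1/2) *\<^sub>R br g v"

text \<open>T*N = N x (R^8)^* with canonical coordinates (q,p); covectors via dot product.\<close>
type_synonym phase = "vec8 \<times> vec8"

text \<open>Geodesic Hamiltonian of the left invariant metric: H = 1/2 sum_a p(E_a(q))^2.\<close>
definition Ham :: "phase \<Rightarrow> real" where
  "Ham z = (1/2) * (\<Sum>a\<in>UNIV. (snd z \<bullet> dL (fst z) (e a))^2)"

definition pull :: "vec8 \<Rightarrow> vec8 \<Rightarrow> vec8" where
  "pull g p = (\<chi> k. p \<bullet> dL g (e k))"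

text \<open>Functions on T*M = functions on T*N invariant under the cotangent-lifted Gamma action.\<close>
definition gamma_invariant :: "(phase \<Rightarrow> real) \<Rightarrow> bool" where
  "gamma_invariant f \<longleftrightarrow> (\<forall>g\<in>Gamma. \<forall>q p. f (nmult g q, p) = f (q, pull g p))"

fun Ck :: "nat \<Rightarrow> ('a::euclidean_space \<Rightarrow> real) \<Rightarrow> bool" where
  "Ck 0 f = continuous_on UNIV f"
| "Ck (Suc k) f = ((\<forall>x. f differentiable at x) \<and>
      (\<forall>b\<in>Basis. Ck k (\<lambda>x. frechet_derivative f (at x) b)))"

definition smooth_fn :: "('a::euclidean_space \<Rightarrow> real) \<Rightarrow> bool" where
  "smooth_fn f \<longleftrightarrow> (\<forall>k. Ck k f)"

definition dq :: "(phase \<Rightarrow> real) \<Rightarrow> idx \<Rightarrow> phase \<Rightarrow> real" where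
  "dq f k z = frechet_derivative f (at z) (e k, 0)"
definition dp :: "(phase \<Rightarrow> real) \<Rightarrow> idx \<Rightarrow> phase \<Rightarrow> real" where
  "dp f k z = frechet_derivative f (at z) (0, e k)"

definition poisson :: "(phase \<Rightarrow> real) \<Rightarrow> (phase \<Rightarrow> real) \<Rightarrow> phase \<Rightarrow> real" where
  "poisson f g z = (\<Sum>k\<in>UNIV. dq f k z * dp g k z - dp f k z * dq g k z)"

definition indep_diffs :: "nat \<Rightarrow> (nat \<Rightarrow> phase \<Rightarrow> real) \<Rightarrow> phase \<Rightarrow> bool" where
  "indep_diffs n F z \<longleftrightarrow>
     (\<forall>c::nat \<Rightarrow> real. (\<forall>v. (\<Sum>i<n. c i * frechet_derivative (F i) (at z) v) = 0)
        \<longrightarrow> (\<forall>i<n. c i = 0))"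

definition geodesic_flow_completely_integrable :: bool where
  "geodesic_flow_completely_integrable \<longleftrightarrow>
    (\<exists>F :: nat \<Rightarrow> phase \<Rightarrow> real.
       (\<forall>i<CARD(idx). smooth_fn (F i) \<and> gamma_invariant (F i) \<and> (\<forall>z. poisson (F i) Ham z = 0))
     \<and> (\<forall>i<CARD(idx). \<forall>j<CARD(idx). \<forall>z. poisson (F i) (F j) z = 0)
     \<and> (\<exists>U. open U \<and> closure U = UNIV \<and> (\<forall>z\<in>U. indep_diffs CARD(idx) F z)))"

end

theory Submission
  imports Defs
begin

text \<open>The Hamiltonian is half the sum of squares of the momenta \<open>lmom a = p(E_a)\<close> of the
  left-invariant frame, and these momenta Poisson-commute according to the structure constants.
  Hence the central momenta, the pairing of the \<open>Y\<close>- and \<open>Z\<close>-momenta and a quartic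
  polynomial in the momenta are six commuting integrals, all invariant under left translations.
  Two more come from the momenta \<open>rmom Yi\<close>, \<open>rmom Yj\<close> of right-invariant fields: they commute
  with every left-invariant momentum, but a lattice element shifts them by an integer multiple of
  \<open>lmom Zk\<close>. Composing with \<open>exp (- 1 / t\<^sup>2) * cos (2 * pi * r / t)\<close>, which is smooth (flat at
  \<open>t = 0\<close>) and invariant under \<open>r \<mapsto> r + k * t\<close> for integers \<open>k\<close>, makes them \<open>\<Gamma>\<close>-invariant.
  The eight differentials are independent wherever a few polynomials and sines of the momenta do
  not vanish, which is an open dense set.\<close>

section \<open>Smooth functions\<close>

lemma frechet_derivative_add:
  fixes f g :: "'a::real_normed_vector \<Rightarrow> real"
  assumes "f differentiable at x" "g differentiable at x"
  shows "frechet_derivative (\<lambda>x. f x + g x) (at x) =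
    (\<lambda>h. frechet_derivative f (at x) h + frechet_derivative g (at x) h)"
  by (rule sym, rule frechet_derivative_at, rule has_derivative_add)
    (use assms in \<open>auto simp: frechet_derivative_works\<close>)

lemma frechet_derivative_diff:
  fixes f g :: "'a::real_normed_vector \<Rightarrow> real"
  assumes "f differentiable at x" "g differentiable at x"
  shows "frechet_derivative (\<lambda>x. f x - g x) (at x) =
    (\<lambda>h. frechet_derivative f (at x) h - frechet_derivative g (at x) h)"
  by (rule sym, rule frechet_derivative_at, rule has_derivative_diff)
    (use assms in \<open>auto simp: frechet_derivative_works\<close>)

lemma frechet_derivative_mult:
  fixes f g :: "'a::real_normed_vector \<Rightarrow> real"
  assumes "f differentiable at x" "g differentiable at x"
  shows "frechet_derivative (\<lambda>x. f x * g x) (at x) =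
    (\<lambda>h. f x * frechet_derivative g (at x) h + frechet_derivative f (at x) h * g x)"
  by (rule sym, rule frechet_derivative_at, rule has_derivative_mult)
    (use assms in \<open>auto simp: frechet_derivative_works\<close>)

lemma frechet_derivative_bounded_linear:
  "bounded_linear f \<Longrightarrow> frechet_derivative f (at x) = f"
  by (metis bounded_linear_imp_has_derivative frechet_derivative_at)

lemma Ck_SucD: "Ck (Suc k) f \<Longrightarrow> Ck k f"
proof (induction k arbitrary: f)
  case 0
  then show ?case
    by (auto intro!: differentiable_imp_continuous_within continuous_at_imp_continuous_on)
next
  case (Suc k)
  then show ?case by (metis Ck.simps(2))
qed

lemma Ck_const: "Ck k (\<lambda>x. c)"
  by (induction k arbitrary: c) auto

lemma Ck_add_mult:
  "Ck k f \<Longrightarrow> Ck k g \<Longrightarrow> Ck k (\<lambda>x. f x + g x) \<and> Ck k (\<lambda>x. f x * g x)"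
proof (induction k arbitrary: f g)
  case 0
  then show ?case by (auto intro!: continuous_intros)
next
  case (Suc k)
  have df: "\<And>x. f differentiable at x" and dg: "\<And>x. g differentiable at x"
    and f': "\<And>b. b \<in> Basis \<Longrightarrow> Ck k (\<lambda>x. frechet_derivative f (at x) b)"
    and g': "\<And>b. b \<in> Basis \<Longrightarrow> Ck k (\<lambda>x. frechet_derivative g (at x) b)"
    using Suc.prems by auto
  have "Ck k f" "Ck k g" using Suc.prems Ck_SucD by blast+
  then show ?case
    using Suc.IH f' g' by (simp add: df dg frechet_derivative_add frechet_derivative_mult)
qed

lemma Ck_add: "Ck k f \<Longrightarrow> Ck k g \<Longrightarrow> Ck k (\<lambda>x. f x + g x)"
  by (simp add: Ck_add_mult)

lemma Ck_mult: "Ck k f \<Longrightarrow> Ck k g \<Longrightarrow> Ck k (\<lambda>x. f x * g x)"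
  by (simp add: Ck_add_mult)

lemma Ck_bounded_linear: "bounded_linear f \<Longrightarrow> Ck k f"
  by (cases k)
    (auto simp: linear_continuous_on frechet_derivative_bounded_linear Ck_const
      bounded_linear_imp_differentiable)

lemma smooth_fn_const: "smooth_fn (\<lambda>x. c)"
  by (simp add: smooth_fn_def Ck_const)

lemma smooth_fn_add: "smooth_fn f \<Longrightarrow> smooth_fn g \<Longrightarrow> smooth_fn (\<lambda>x. f x + g x)"
  by (simp add: smooth_fn_def Ck_add)

lemma smooth_fn_mult: "smooth_fn f \<Longrightarrow> smooth_fn g \<Longrightarrow> smooth_fn (\<lambda>x. f x * g x)"
  by (simp add: smooth_fn_def Ck_mult)

lemma smooth_fn_diff: "smooth_fn f \<Longrightarrow> smooth_fn g \<Longrightarrow> smooth_fn (\<lambda>x. f x - g x)"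
  using smooth_fn_add[of f "\<lambda>x. (- 1) * g x"] smooth_fn_mult smooth_fn_const by fastforce

lemma smooth_fn_divide_const: "smooth_fn f \<Longrightarrow> smooth_fn (\<lambda>x. f x / c)"
  using smooth_fn_mult[OF _ smooth_fn_const, of f "1 / c"] by simp

lemma smooth_fn_bounded_linear: "bounded_linear f \<Longrightarrow> smooth_fn f"
  by (simp add: smooth_fn_def Ck_bounded_linear)

lemma smooth_fn_differentiable: "smooth_fn f \<Longrightarrow> f differentiable at x"
  unfolding smooth_fn_def by (metis Ck.simps(2))

lemma smooth_fn_has_frechet_derivative:
  "smooth_fn f \<Longrightarrow> (f has_derivative frechet_derivative f (at x)) (at x)"
  using smooth_fn_differentiable frechet_derivative_works by blast

lemma smooth_fn_continuous_on: "smooth_fn f \<Longrightarrow> continuous_on UNIV f"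
  unfolding smooth_fn_def by (metis Ck.simps(1))

section \<open>A flat periodic function\<close>

definition trig :: "bool \<Rightarrow> real \<Rightarrow> real" where
  "trig b = (if b then cos else sin)"

definition trig_sign :: "bool \<Rightarrow> real" where
  "trig_sign b = (if b then - 1 else 1)"

lemma has_derivative_trig [derivative_intros]:
  "(g has_derivative g') (at x within s) \<Longrightarrow>
   ((\<lambda>x. trig b (g x)) has_derivative (\<lambda>h. trig_sign b * trig (\<not> b) (g x) * g' h)) (at x within s)"
  by (cases b) (auto simp: trig_def trig_sign_def intro!: derivative_eq_intros)

definition flat_atom :: "nat \<Rightarrow> nat \<Rightarrow> bool \<Rightarrow> real \<times> real \<Rightarrow> real" where
  "flat_atom n m b w = (if fst w = 0 then 0 else
     exp (- 1 / (fst w)\<^sup>2) * (1 / fst w) ^ n * (snd w) ^ m * trig b (2 * pi * snd w / fst w))"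

text \<open>A term \<open>(a, n, m, b)\<close> stands for \<open>a * flat_atom n m b\<close>. These linear combinations are
  closed under both partial derivatives, which gives their smoothness; \<open>flat_dt\<close> and \<open>flat_dr\<close>
  are the derivatives in the first and second variable.\<close>

type_synonym flat_term = "real \<times> nat \<times> nat \<times> bool"

definition flat_comb :: "flat_term list \<Rightarrow> real \<times> real \<Rightarrow> real" where
  "flat_comb L w = (\<Sum>(a, n, m, b) \<leftarrow> L. a * flat_atom n m b w)"

definition flat_dt :: "flat_term \<Rightarrow> flat_term list" where
  "flat_dt x = (case x of (a, n, m, b) \<Rightarrow>
     [(2 * a, n + 3, m, b), (- a * real n, Suc n, m, b),
      (- 2 * pi * a * trig_sign b, n + 2, Suc m, \<not> b)])"

definition flat_dr :: "flat_term \<Rightarrow> flat_term list" where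
  "flat_dr x = (case x of (a, n, m, b) \<Rightarrow>
     [(a * real m, n, m - 1, b), (2 * pi * a * trig_sign b, Suc n, m, \<not> b)])"

lemma flat_comb_Nil [simp]: "flat_comb [] w = 0"
  by (simp add: flat_comb_def)

lemma flat_comb_Cons [simp]:
  "flat_comb ((a, n, m, b) # L) w = a * flat_atom n m b w + flat_comb L w"
  by (simp add: flat_comb_def)

lemma flat_comb_append [simp]: "flat_comb (L @ L') w = flat_comb L w + flat_comb L' w"
  by (simp add: flat_comb_def)

lemma flat_comb_on_axis: "fst w = 0 \<Longrightarrow> flat_comb L w = 0"
  by (induction L) (auto simp: flat_atom_def)

lemma flat_atom_has_derivative_off_axis:
  assumes "fst w \<noteq> 0"
  shows "(flat_atom n m b has_derivative
     (\<lambda>h. fst h * flat_comb (flat_dt (1, n, m, b)) w + snd h * flat_comb (flat_dr (1, n, m, b)) w)) (at w)"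
proof -
  obtain t r where w: "w = (t, r)" by (cases w)
  have t: "t \<noteq> 0" using assms w by simp
  let ?f = "\<lambda>w::real \<times> real. exp (- 1 / (fst w)\<^sup>2) * (1 / fst w) ^ n * (snd w) ^ m *
    trig b (2 * pi * snd w / fst w)"
  have "(?f has_derivative
     (\<lambda>h. fst h * flat_comb (flat_dt (1, n, m, b)) w + snd h * flat_comb (flat_dr (1, n, m, b)) w)) (at w)"
    unfolding w
    apply (rule has_derivative_eq_rhs)
     apply (auto intro!: derivative_eq_intros simp: t)
    apply (cases n)
     apply (simp_all add: fun_eq_iff flat_dt_def flat_dr_def flat_atom_def t power_add
        power3_eq_cube power4_eq_xxxx field_simps)
    done
  then show ?thesis
  proof (rule has_derivative_transform_within_open)
    show "open {w::real \<times> real. fst w \<noteq> 0}"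
      by (rule open_Collect_neq) (auto intro: continuous_intros)
  qed (use assms in \<open>auto simp: flat_atom_def\<close>)
qed

lemma exp_neg_inverse_square_le:
  assumes "t \<noteq> 0" "K > 0"
  shows "exp (- 1 / t\<^sup>2) \<le> real K ^ K * (t\<^sup>2) ^ K"
proof -
  have y: "0 < 1 / t\<^sup>2" using assms by simp
  have "(1 / t\<^sup>2 / real K) ^ K \<le> (1 + (1 / t\<^sup>2) / real K) ^ K"
    by (rule power_mono) (use y assms in auto)
  also have "\<dots> \<le> exp (1 / t\<^sup>2)"
    by (rule exp_ge_one_plus_x_over_n_power_n) (use y assms in \<open>auto intro: order.trans[of _ 0]\<close>)
  finally have h: "1 / (real K ^ K * (t\<^sup>2) ^ K) \<le> exp (1 / t\<^sup>2)"
    by (simp add: power_divide power_mult_distrib mult.commute)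
  have "exp (- 1 / t\<^sup>2) = 1 / exp (1 / t\<^sup>2)" by (simp add: exp_minus field_simps)
  also have "\<dots> \<le> 1 / (1 / (real K ^ K * (t\<^sup>2) ^ K))"
    by (rule divide_left_mono[OF h]) (use assms in auto)
  finally show ?thesis by simp
qed

lemma abs_flat_atom_le_square:
  assumes "\<bar>t\<bar> \<le> 1" "\<bar>r\<bar> \<le> \<rho>"
  shows "\<bar>flat_atom n m b (t, r)\<bar> \<le> real (Suc n) ^ Suc n * \<rho> ^ m * t\<^sup>2"
proof (cases "t = 0")
  case False
  have "\<bar>trig b (2 * pi * r / t)\<bar> \<le> 1" by (auto simp: trig_def)
  then have "\<bar>flat_atom n m b (t, r)\<bar> \<le> exp (- 1 / t\<^sup>2) * \<bar>1 / t\<bar> ^ n * \<bar>r\<bar> ^ m"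
    by (auto simp: flat_atom_def abs_mult power_abs intro!: mult_left_le)
  also have "\<dots> \<le> (real (Suc n) ^ Suc n * (t\<^sup>2) ^ Suc n) * \<bar>1 / t\<bar> ^ n * \<rho> ^ m"
    using assms by (intro mult_mono exp_neg_inverse_square_le power_mono False) auto
  also have "\<dots> = real (Suc n) ^ Suc n * \<rho> ^ m * t\<^sup>2 * \<bar>t\<bar> ^ n"
  proof -
    have "(t\<^sup>2) ^ n = (\<bar>t\<bar> ^ n)\<^sup>2"
      by (metis power2_abs power_abs power_mult_distrib power_even_eq power_mult)
    then show ?thesis using False by (simp add: power_divide power_abs field_simps power2_eq_square)
  qed
  also have "\<dots> \<le> real (Suc n) ^ Suc n * \<rho> ^ m * t\<^sup>2"
    using assms by (intro mult_left_le power_le_one) (auto intro: order.trans[OF abs_ge_zero])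
  finally show ?thesis .
qed (simp add: flat_atom_def)

lemma flat_atom_has_derivative_on_axis:
  assumes "fst w = 0"
  shows "(flat_atom n m b has_derivative (\<lambda>h. 0)) (at w)"
  unfolding has_derivative_at'
proof (intro conjI allI impI bounded_linear_zero)
  fix \<epsilon> :: real assume "\<epsilon> > 0"
  obtain r0 where w: "w = (0, r0)" using assms by (cases w) auto
  define C where "C = real (Suc n) ^ Suc n * (\<bar>r0\<bar> + 1) ^ m"
  have "C > 0" by (simp add: C_def add_pos_nonneg)
  show "\<exists>d>0. \<forall>x. 0 < norm (x - w) \<and> norm (x - w) < d \<longrightarrow>
      norm (flat_atom n m b x - flat_atom n m b w - 0) / norm (x - w) < \<epsilon>"
  proof (intro exI[of _ "min 1 (\<epsilon> / C)"] conjI allI impI)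
    fix x assume x: "0 < norm (x - w) \<and> norm (x - w) < min 1 (\<epsilon> / C)"
    obtain t r where xt: "x = (t, r)" by (cases x)
    have dx: "x - w = (t, r - r0)" using xt w by simp
    have t: "\<bar>t\<bar> \<le> norm (x - w)" using norm_fst_le[of t "r - r0"] dx by simp
    have "\<bar>r - r0\<bar> \<le> norm (x - w)" using norm_snd_le[of "r - r0" t] dx by simp
    then have r: "\<bar>r\<bar> \<le> \<bar>r0\<bar> + 1" using x by linarith
    have "\<bar>flat_atom n m b x\<bar> \<le> C * t\<^sup>2"
      unfolding C_def xt using t x r by (intro abs_flat_atom_le_square) auto
    also have "\<dots> \<le> C * (\<bar>t\<bar> * norm (x - w))"
    proof -
      have "t\<^sup>2 \<le> \<bar>t\<bar> * norm (x - w)"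
        using t by (metis abs_ge_zero abs_mult_self_eq mult_left_mono power2_eq_square)
      then show ?thesis using \<open>C > 0\<close> by simp
    qed
    finally have "\<bar>flat_atom n m b x\<bar> / norm (x - w) \<le> C * \<bar>t\<bar>"
      using x by (simp add: divide_le_eq)
    also have "\<dots> < C * (\<epsilon> / C)"
      using t x \<open>C > 0\<close> by (intro mult_strict_left_mono) auto
    finally show "norm (flat_atom n m b x - flat_atom n m b w - 0) / norm (x - w) < \<epsilon>"
      using w \<open>C > 0\<close> by (simp add: flat_atom_def)
  qed (use \<open>\<epsilon> > 0\<close> \<open>C > 0\<close> in auto)
qed

lemma flat_atom_has_derivative:
  "(flat_atom n m b has_derivative
     (\<lambda>h. fst h * flat_comb (flat_dt (1, n, m, b)) w + snd h * flat_comb (flat_dr (1, n, m, b)) w)) (at w)"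
  using flat_atom_has_derivative_on_axis[of w] flat_comb_on_axis[of w]
    flat_atom_has_derivative_off_axis[of w] by (cases "fst w = 0") simp_all

definition flat_dt_list :: "flat_term list \<Rightarrow> flat_term list" where
  "flat_dt_list L = concat (map flat_dt L)"

definition flat_dr_list :: "flat_term list \<Rightarrow> flat_term list" where
  "flat_dr_list L = concat (map flat_dr L)"

lemma flat_comb_has_derivative:
  "(flat_comb L has_derivative
     (\<lambda>h. fst h * flat_comb (flat_dt_list L) w + snd h * flat_comb (flat_dr_list L) w)) (at w)"
proof (induction L)
  case Nil
  then show ?case by (simp add: flat_comb_def flat_dt_list_def flat_dr_list_def)
next
  case (Cons x L)
  obtain a n m b where x: "x = (a, n, m, b)" by (cases x) auto
  have "flat_comb (x # L) = (\<lambda>w. a * flat_atom n m b w + flat_comb L w)" by (simp add: x fun_eq_iff)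
  moreover have "flat_comb (flat_dt (a, n, m, b)) w = a * flat_comb (flat_dt (1, n, m, b)) w"
    "flat_comb (flat_dr (a, n, m, b)) w = a * flat_comb (flat_dr (1, n, m, b)) w"
    by (simp_all add: flat_dt_def flat_dr_def algebra_simps)
  ultimately show ?case
    using has_derivative_add[OF has_derivative_mult_right[OF flat_atom_has_derivative] Cons.IH,
      of a n m b]
    by (simp add: x flat_dt_list_def flat_dr_list_def algebra_simps)
qed

lemma has_derivative_flat_comb_comp:
  assumes "(g1 has_derivative g1') (at z)" "(g2 has_derivative g2') (at z)"
  shows "((\<lambda>z. flat_comb L (g1 z, g2 z)) has_derivative
    (\<lambda>h. g1' h * flat_comb (flat_dt_list L) (g1 z, g2 z) + g2' h * flat_comb (flat_dr_list L) (g1 z, g2 z)))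
    (at z)"
  using diff_chain_at[OF has_derivative_Pair[OF assms] flat_comb_has_derivative] by (simp add: o_def)

lemma frechet_derivative_flat_comb_comp:
  assumes "smooth_fn g1" "smooth_fn g2"
  shows "frechet_derivative (\<lambda>z. flat_comb L (g1 z, g2 z)) (at z) =
    (\<lambda>h. frechet_derivative g1 (at z) h * flat_comb (flat_dt_list L) (g1 z, g2 z) +
         frechet_derivative g2 (at z) h * flat_comb (flat_dr_list L) (g1 z, g2 z))"
  by (rule sym, rule frechet_derivative_at, rule has_derivative_flat_comb_comp)
    (use assms in \<open>auto intro: smooth_fn_has_frechet_derivative\<close>)

lemma differentiable_flat_comb_comp:
  assumes "smooth_fn g1" "smooth_fn g2"
  shows "(\<lambda>z. flat_comb L (g1 z, g2 z)) differentiable at z"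
  using has_derivative_flat_comb_comp[OF smooth_fn_has_frechet_derivative smooth_fn_has_frechet_derivative]
    assms unfolding differentiable_def by blast

lemma Ck_flat_comb_comp:
  fixes g1 g2 :: "'a::euclidean_space \<Rightarrow> real"
  assumes "smooth_fn g1" "smooth_fn g2"
  shows "Ck k (\<lambda>z. flat_comb L (g1 z, g2 z))"
proof (induction k arbitrary: L)
  case 0
  show ?case
    using differentiable_flat_comb_comp[OF assms]
    by (auto intro!: differentiable_imp_continuous_within continuous_at_imp_continuous_on)
next
  case (Suc k)
  have dg: "Ck k (\<lambda>z. frechet_derivative g (at z) b)" if "smooth_fn g" "b \<in> Basis" for g and b :: 'a
    using that unfolding smooth_fn_def by (metis Ck.simps(2))
  show ?case
  proof (simp only: Ck.simps, intro conjI allI ballI)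
    show "(\<lambda>z. flat_comb L (g1 z, g2 z)) differentiable at z" for z
      by (rule differentiable_flat_comb_comp[OF assms])
  next
    fix b :: 'a assume b: "b \<in> Basis"
    show "Ck k (\<lambda>z. frechet_derivative (\<lambda>z. flat_comb L (g1 z, g2 z)) (at z) b)"
      unfolding frechet_derivative_flat_comb_comp[OF assms]
      by (intro Ck_add Ck_mult dg assms b Suc.IH)
  qed
qed

lemma smooth_fn_flat_comb_comp:
  "smooth_fn g1 \<Longrightarrow> smooth_fn g2 \<Longrightarrow> smooth_fn (\<lambda>z. flat_comb L (g1 z, g2 z))"
  by (simp add: smooth_fn_def Ck_flat_comb_comp)

lemmas smooth_fn_intros [simp] = smooth_fn_const smooth_fn_add smooth_fn_mult smooth_fn_diff
  smooth_fn_divide_const smooth_fn_flat_comb_comp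

section \<open>Calculus of the canonical Poisson bracket\<close>

lemma e_nth: "e a $ k = (if k = a then 1 else 0)"
  by (simp add: e_def axis_def)

lemma sum_UNIV_idx: "(\<Sum>a\<in>UNIV. f a) = f Xi + f Xj + f Yi + f Yj + f Yk + f Zi + f Zj + f Zk"
  by (simp add: UNIV_idx add.assoc)

definition qcoord :: "idx \<Rightarrow> phase \<Rightarrow> real" where
  "qcoord i z = fst z $ i"

definition pcoord :: "idx \<Rightarrow> phase \<Rightarrow> real" where
  "pcoord i z = snd z $ i"

lemma bounded_linear_qcoord: "bounded_linear (qcoord i)"
  unfolding qcoord_def by (rule bounded_linear_compose[OF bounded_linear_vec_nth bounded_linear_fst])

lemma bounded_linear_pcoord: "bounded_linear (pcoord i)"
  unfolding pcoord_def by (rule bounded_linear_compose[OF bounded_linear_vec_nth bounded_linear_snd])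

lemma smooth_fn_qcoord [simp]: "smooth_fn (qcoord i)"
  by (rule smooth_fn_bounded_linear[OF bounded_linear_qcoord])

lemma smooth_fn_pcoord [simp]: "smooth_fn (pcoord i)"
  by (rule smooth_fn_bounded_linear[OF bounded_linear_pcoord])

lemma dq_add: "smooth_fn f \<Longrightarrow> smooth_fn g \<Longrightarrow> dq (\<lambda>z. f z + g z) k z = dq f k z + dq g k z"
  by (simp add: dq_def frechet_derivative_add smooth_fn_differentiable)

lemma dp_add: "smooth_fn f \<Longrightarrow> smooth_fn g \<Longrightarrow> dp (\<lambda>z. f z + g z) k z = dp f k z + dp g k z"
  by (simp add: dp_def frechet_derivative_add smooth_fn_differentiable)

lemma dq_diff: "smooth_fn f \<Longrightarrow> smooth_fn g \<Longrightarrow> dq (\<lambda>z. f z - g z) k z = dq f k z - dq g k z"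
  by (simp add: dq_def frechet_derivative_diff smooth_fn_differentiable)

lemma dp_diff: "smooth_fn f \<Longrightarrow> smooth_fn g \<Longrightarrow> dp (\<lambda>z. f z - g z) k z = dp f k z - dp g k z"
  by (simp add: dp_def frechet_derivative_diff smooth_fn_differentiable)

lemma dq_mult:
  "smooth_fn f \<Longrightarrow> smooth_fn g \<Longrightarrow> dq (\<lambda>z. f z * g z) k z = f z * dq g k z + dq f k z * g z"
  by (simp add: dq_def frechet_derivative_mult smooth_fn_differentiable)

lemma dp_mult:
  "smooth_fn f \<Longrightarrow> smooth_fn g \<Longrightarrow> dp (\<lambda>z. f z * g z) k z = f z * dp g k z + dp f k z * g z"
  by (simp add: dp_def frechet_derivative_mult smooth_fn_differentiable)

lemma dq_divide_const: "smooth_fn f \<Longrightarrow> dq (\<lambda>z. f z / c) k z = dq f k z / c"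
  using dq_mult[of f "\<lambda>z. 1 / c" k z] by (simp add: dq_def smooth_fn_const)

lemma dp_divide_const: "smooth_fn f \<Longrightarrow> dp (\<lambda>z. f z / c) k z = dp f k z / c"
  using dp_mult[of f "\<lambda>z. 1 / c" k z] by (simp add: dp_def smooth_fn_const)

lemma dq_const: "dq (\<lambda>z. c) k z = 0"
  by (simp add: dq_def)

lemma dp_const: "dp (\<lambda>z. c) k z = 0"
  by (simp add: dp_def)

lemma dq_flat_comb_comp:
  "smooth_fn g1 \<Longrightarrow> smooth_fn g2 \<Longrightarrow> dq (\<lambda>z. flat_comb L (g1 z, g2 z)) k z =
     dq g1 k z * flat_comb (flat_dt_list L) (g1 z, g2 z) + dq g2 k z * flat_comb (flat_dr_list L) (g1 z, g2 z)"
  by (simp add: dq_def frechet_derivative_flat_comb_comp)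

lemma dp_flat_comb_comp:
  "smooth_fn g1 \<Longrightarrow> smooth_fn g2 \<Longrightarrow> dp (\<lambda>z. flat_comb L (g1 z, g2 z)) k z =
     dp g1 k z * flat_comb (flat_dt_list L) (g1 z, g2 z) + dp g2 k z * flat_comb (flat_dr_list L) (g1 z, g2 z)"
  by (simp add: dp_def frechet_derivative_flat_comb_comp)

lemma dq_qcoord: "dq (qcoord i) k z = (if i = k then 1 else 0)"
  by (simp add: dq_def frechet_derivative_bounded_linear[OF bounded_linear_qcoord] qcoord_def e_nth)

lemma dp_qcoord: "dp (qcoord i) k z = 0"
  by (simp add: dp_def frechet_derivative_bounded_linear[OF bounded_linear_qcoord] qcoord_def)

lemma dq_pcoord: "dq (pcoord i) k z = 0"
  by (simp add: dq_def frechet_derivative_bounded_linear[OF bounded_linear_pcoord] pcoord_def)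

lemma dp_pcoord: "dp (pcoord i) k z = (if i = k then 1 else 0)"
  by (simp add: dp_def frechet_derivative_bounded_linear[OF bounded_linear_pcoord] pcoord_def e_nth)

lemmas dp_rules = dp_add dp_diff dp_mult dp_divide_const dp_const dp_flat_comb_comp dp_qcoord dp_pcoord

lemma poisson_commute: "poisson f g z = - poisson g f z"
  by (simp add: poisson_def sum_negf[symmetric] algebra_simps)

lemma poisson_add_left: "smooth_fn f \<Longrightarrow> smooth_fn g \<Longrightarrow>
   poisson (\<lambda>z. f z + g z) h z = poisson f h z + poisson g h z"
  by (simp add: poisson_def dq_add dp_add sum.distrib[symmetric] algebra_simps)

lemma poisson_diff_left: "smooth_fn f \<Longrightarrow> smooth_fn g \<Longrightarrow>
   poisson (\<lambda>z. f z - g z) h z = poisson f h z - poisson g h z"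
  by (simp add: poisson_def dq_diff dp_diff sum_subtractf[symmetric] algebra_simps)

lemma poisson_mult_left: "smooth_fn f \<Longrightarrow> smooth_fn g \<Longrightarrow>
   poisson (\<lambda>z. f z * g z) h z = f z * poisson g h z + g z * poisson f h z"
  by (simp add: poisson_def dq_mult dp_mult sum.distrib[symmetric] sum_distrib_left algebra_simps)

lemma poisson_divide_const_left: "smooth_fn f \<Longrightarrow> poisson (\<lambda>z. f z / c) h z = poisson f h z / c"
  by (simp add: poisson_def dq_divide_const dp_divide_const sum_divide_distrib algebra_simps
    diff_divide_distrib)

lemma poisson_const_left: "poisson (\<lambda>z. c) h z = 0"
  by (simp add: poisson_def dq_const dp_const)

lemma poisson_flat_comb_comp_left: "smooth_fn g1 \<Longrightarrow> smooth_fn g2 \<Longrightarrow>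
   poisson (\<lambda>z. flat_comb L (g1 z, g2 z)) h z =
     flat_comb (flat_dt_list L) (g1 z, g2 z) * poisson g1 h z +
     flat_comb (flat_dr_list L) (g1 z, g2 z) * poisson g2 h z"
  by (simp add: poisson_def dq_flat_comb_comp dp_flat_comb_comp sum.distrib[symmetric]
    sum_distrib_left algebra_simps)

lemma poisson_add_right: "smooth_fn f \<Longrightarrow> smooth_fn g \<Longrightarrow>
   poisson h (\<lambda>z. f z + g z) z = poisson h f z + poisson h g z"
  by (subst poisson_commute) (simp add: poisson_add_left poisson_commute[of f h] poisson_commute[of g h])

lemma poisson_diff_right: "smooth_fn f \<Longrightarrow> smooth_fn g \<Longrightarrow>
   poisson h (\<lambda>z. f z - g z) z = poisson h f z - poisson h g z"
  by (subst poisson_commute) (simp add: poisson_diff_left poisson_commute[of f h] poisson_commute[of g h])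

lemma poisson_mult_right: "smooth_fn f \<Longrightarrow> smooth_fn g \<Longrightarrow>
   poisson h (\<lambda>z. f z * g z) z = f z * poisson h g z + g z * poisson h f z"
  by (subst poisson_commute) (simp add: poisson_mult_left poisson_commute[of f h] poisson_commute[of g h])

lemma poisson_divide_const_right: "smooth_fn f \<Longrightarrow> poisson h (\<lambda>z. f z / c) z = poisson h f z / c"
  by (subst poisson_commute) (simp add: poisson_divide_const_left poisson_commute[of f h])

lemma poisson_const_right: "poisson h (\<lambda>z. c) z = 0"
  by (subst poisson_commute) (simp add: poisson_const_left)

lemma poisson_flat_comb_comp_right: "smooth_fn g1 \<Longrightarrow> smooth_fn g2 \<Longrightarrow>
   poisson h (\<lambda>z. flat_comb L (g1 z, g2 z)) z =
     flat_comb (flat_dt_list L) (g1 z, g2 z) * poisson h g1 z +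
     flat_comb (flat_dr_list L) (g1 z, g2 z) * poisson h g2 z"
  by (subst poisson_commute)
    (simp add: poisson_flat_comb_comp_left poisson_commute[of g1 h] poisson_commute[of g2 h])

lemma poisson_qcoord_qcoord: "poisson (qcoord i) (qcoord j) z = 0"
  by (simp add: poisson_def dq_qcoord dp_qcoord)

lemma poisson_pcoord_pcoord: "poisson (pcoord i) (pcoord j) z = 0"
  by (simp add: poisson_def dq_pcoord dp_pcoord)

lemma poisson_qcoord_pcoord: "poisson (qcoord i) (pcoord j) z = (if i = j then 1 else 0)"
  by (cases i; cases j) (simp_all add: poisson_def dq_qcoord dp_qcoord dq_pcoord dp_pcoord sum_UNIV_idx)

lemma poisson_pcoord_qcoord: "poisson (pcoord i) (qcoord j) z = (if i = j then - 1 else 0)"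
  by (subst poisson_commute) (simp add: poisson_qcoord_pcoord)

lemmas poisson_rules = poisson_add_left poisson_diff_left poisson_mult_left poisson_divide_const_left
  poisson_const_left poisson_flat_comb_comp_left poisson_add_right poisson_diff_right
  poisson_mult_right poisson_divide_const_right poisson_const_right poisson_flat_comb_comp_right
  poisson_qcoord_qcoord poisson_pcoord_pcoord poisson_qcoord_pcoord poisson_pcoord_qcoord

section \<open>Left- and right-invariant momenta\<close>

lemma br_nth: "br x y $ k = (case k of
    Zi \<Rightarrow> x$Xj * y$Yk - x$Yk * y$Xj
  | Zj \<Rightarrow> x$Yk * y$Xi - x$Xi * y$Yk
  | Zk \<Rightarrow> x$Xi * y$Yj - x$Yj * y$Xi - x$Xj * y$Yi + x$Yi * y$Xj
  | _ \<Rightarrow> 0)"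
  by (cases k) (simp_all add: br_def sum_UNIV_idx e_nth algebra_simps)

lemma inner_vec8: "(x::vec8) \<bullet> y = x$Xi * y$Xi + x$Xj * y$Xj + x$Yi * y$Yi + x$Yj * y$Yj + x$Yk * y$Yk
   + x$Zi * y$Zi + x$Zj * y$Zj + x$Zk * y$Zk"
  by (simp add: inner_vec_def sum_UNIV_idx)

definition lmom :: "idx \<Rightarrow> phase \<Rightarrow> real" where
  "lmom a z = snd z \<bullet> dL (fst z) (e a)"

text \<open>In exponential coordinates \<open>d(R_q)(e_a) = e_a + 1/2 [e_a, q]\<close>, so \<open>rmom a\<close> is the momentum
  of the right-invariant vector field through \<open>e_a\<close>.\<close>

definition rmom :: "idx \<Rightarrow> phase \<Rightarrow> real" where
  "rmom a z = snd z \<bullet> (e a + (1/2) *\<^sub>R br (e a) (fst z))"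

lemma lmom_Xi: "lmom Xi =
    (\<lambda>z. pcoord Xi z - 1/2 * qcoord Yj z * pcoord Zk z + 1/2 * qcoord Yk z * pcoord Zj z)"
  and lmom_Xj: "lmom Xj =
    (\<lambda>z. pcoord Xj z + 1/2 * qcoord Yi z * pcoord Zk z - 1/2 * qcoord Yk z * pcoord Zi z)"
  and lmom_Yi: "lmom Yi = (\<lambda>z. pcoord Yi z - 1/2 * qcoord Xj z * pcoord Zk z)"
  and lmom_Yj: "lmom Yj = (\<lambda>z. pcoord Yj z + 1/2 * qcoord Xi z * pcoord Zk z)"
  and lmom_Yk: "lmom Yk =
    (\<lambda>z. pcoord Yk z - 1/2 * qcoord Xi z * pcoord Zj z + 1/2 * qcoord Xj z * pcoord Zi z)"
  and lmom_Zi: "lmom Zi = pcoord Zi"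
  and lmom_Zj: "lmom Zj = pcoord Zj"
  and lmom_Zk: "lmom Zk = pcoord Zk"
  by (simp_all add: fun_eq_iff lmom_def qcoord_def pcoord_def inner_vec8 dL_def br_nth e_nth algebra_simps)

lemmas lmom_coords = lmom_Xi lmom_Xj lmom_Yi lmom_Yj lmom_Yk lmom_Zi lmom_Zj lmom_Zk

lemma rmom_Yi: "rmom Yi = (\<lambda>z. pcoord Yi z + 1/2 * qcoord Xj z * pcoord Zk z)"
  and rmom_Yj: "rmom Yj = (\<lambda>z. pcoord Yj z - 1/2 * qcoord Xi z * pcoord Zk z)"
  by (simp_all add: fun_eq_iff rmom_def qcoord_def pcoord_def inner_vec8 br_nth e_nth algebra_simps)

lemma smooth_fn_lmom [simp]: "smooth_fn (lmom a)"
  by (cases a) (simp_all add: lmom_coords)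

lemma smooth_fn_rmom_Y: "a \<in> {Yi, Yj} \<Longrightarrow> smooth_fn (rmom a)"
  by (auto simp: rmom_Yi rmom_Yj)

lemma Ham_eq: "Ham = (\<lambda>z. 1/2 * (\<Sum>a\<in>UNIV. lmom a z * lmom a z))"
  by (simp add: fun_eq_iff Ham_def lmom_def power2_eq_square)

text \<open>The bracket \<open>{lmom a, lmom b} = - lmom [e_a, e_b]\<close>, written out with the structure constants.\<close>

definition lmom_bracket :: "idx \<Rightarrow> idx \<Rightarrow> phase \<Rightarrow> real" where
  "lmom_bracket a b z = (case (a, b) of
     (Xi, Yj) \<Rightarrow> - lmom Zk z | (Yj, Xi) \<Rightarrow> lmom Zk z
   | (Xi, Yk) \<Rightarrow> lmom Zj z | (Yk, Xi) \<Rightarrow> - lmom Zj z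
   | (Xj, Yi) \<Rightarrow> lmom Zk z | (Yi, Xj) \<Rightarrow> - lmom Zk z
   | (Xj, Yk) \<Rightarrow> - lmom Zi z | (Yk, Xj) \<Rightarrow> lmom Zi z
   | _ \<Rightarrow> 0)"

lemma poisson_lmom_lmom: "poisson (lmom a) (lmom b) z = lmom_bracket a b z"
  by (cases a; cases b) (simp_all add: lmom_coords lmom_bracket_def poisson_rules)

lemma poisson_rmom_lmom: "a \<in> {Yi, Yj} \<Longrightarrow> poisson (rmom a) (lmom b) z = 0"
  by (cases b) (auto simp: lmom_coords rmom_Yi rmom_Yj poisson_rules)

lemma poisson_rmom_rmom: "a \<in> {Yi, Yj} \<Longrightarrow> b \<in> {Yi, Yj} \<Longrightarrow> poisson (rmom a) (rmom b) z = 0"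
  by (auto simp: rmom_Yi rmom_Yj poisson_rules)

lemma poisson_lmom_rmom: "a \<in> {Yi, Yj} \<Longrightarrow> poisson (lmom b) (rmom a) z = 0"
  using poisson_rmom_lmom poisson_commute by (metis minus_zero)

section \<open>The first integrals\<close>

definition theta :: "flat_term list" where
  "theta = [(1, 0, 0, True)]"

lemma flat_comb_theta_periodic:
  assumes "k \<in> \<int>"
  shows "flat_comb theta (t, r + k * t) = flat_comb theta (t, r)"
proof (cases "t = 0")
  case False
  have "2 * pi * (r + k * t) / t = 2 * pi * r / t + 2 * pi * k"
    using False by (simp add: field_simps)
  moreover have "cos (2 * pi * r / t + 2 * pi * k) = cos (2 * pi * r / t)"
    using cos_integer_2pi[OF assms] sin_integer_2pi[OF assms] by (simp add: cos_add)
  ultimately show ?thesis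
    using False by (simp add: theta_def flat_atom_def trig_def)
qed (simp add: theta_def flat_atom_def)

definition yz_pairing :: "phase \<Rightarrow> real" where
  "yz_pairing z = lmom Yi z * lmom Zi z + lmom Yj z * lmom Zj z + lmom Yk z * lmom Zk z"

text \<open>With \<open>\<mu>\<close> the left-trivialised momentum, this is \<open>\<Sum>\<^sub>b \<langle>\<mu>, [\<mu>, e\<^sub>b]\<rangle>\<^sup>2\<close>.\<close>

definition quartic_integral :: "phase \<Rightarrow> real" where
  "quartic_integral z =
     (lmom Zk z * lmom Yj z - lmom Zj z * lmom Yk z) * (lmom Zk z * lmom Yj z - lmom Zj z * lmom Yk z)
   + (lmom Zi z * lmom Yk z - lmom Zk z * lmom Yi z) * (lmom Zi z * lmom Yk z - lmom Zk z * lmom Yi z)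
   + (lmom Zk z * lmom Xj z) * (lmom Zk z * lmom Xj z) + (lmom Zk z * lmom Xi z) * (lmom Zk z * lmom Xi z)
   + (lmom Zi z * lmom Xj z - lmom Zj z * lmom Xi z) * (lmom Zi z * lmom Xj z - lmom Zj z * lmom Xi z)"

definition theta_integral :: "idx \<Rightarrow> phase \<Rightarrow> real" where
  "theta_integral a z = flat_comb theta (lmom Zk z, rmom a z)"

definition first_integrals :: "(phase \<Rightarrow> real) list" where
  "first_integrals = [lmom Zi, lmom Zj, lmom Zk, yz_pairing, Ham, quartic_integral,
     theta_integral Yi, theta_integral Yj]"

lemmas first_integrals_unfold = first_integrals_def yz_pairing_def[abs_def]
  quartic_integral_def[abs_def] theta_integral_def[abs_def] Ham_eq sum_UNIV_idx

lemma less_8_cases: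
  "(i::nat) < 8 \<Longrightarrow> i = 0 \<or> i = 1 \<or> i = 2 \<or> i = 3 \<or> i = 4 \<or> i = 5 \<or> i = 6 \<or> i = 7"
  by auto

lemma smooth_fn_first_integrals: "i < 8 \<Longrightarrow> smooth_fn (first_integrals ! i)"
  by (drule less_8_cases, elim disjE)
    (simp_all add: first_integrals_unfold smooth_fn_rmom_Y)

lemma poisson_first_integrals:
  "i < 8 \<Longrightarrow> j < 8 \<Longrightarrow> poisson (first_integrals ! i) (first_integrals ! j) z = 0"
  apply (drule less_8_cases)+
  apply (elim disjE; hypsubst_thin)
  apply (simp_all add: first_integrals_unfold smooth_fn_rmom_Y poisson_rules poisson_lmom_lmom
      poisson_rmom_lmom poisson_lmom_rmom poisson_rmom_rmom lmom_bracket_def)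
  apply algebra+
  done

lemma nmult_nth: "nmult g q $ k = g $ k + q $ k + 1/2 * br g q $ k"
  by (simp add: nmult_def)

lemma pull_nth: "pull g p $ k = lmom k (g, p)"
  by (simp add: pull_def lmom_def)

lemma lmom_left_invariant: "lmom a (nmult g q, p) = lmom a (q, pull g p)"
  by (cases a)
    (simp_all add: lmom_coords qcoord_def pcoord_def nmult_nth pull_nth br_nth field_simps)

lemma rmom_Yi_left_translate:
  "rmom Yi (nmult g q, p) = rmom Yi (q, pull g p) + g $ Xj * lmom Zk (q, pull g p)"
  by (simp add: rmom_Yi lmom_coords qcoord_def pcoord_def nmult_nth pull_nth br_nth algebra_simps)

lemma rmom_Yj_left_translate:
  "rmom Yj (nmult g q, p) = rmom Yj (q, pull g p) - g $ Xi * lmom Zk (q, pull g p)"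
  by (simp add: rmom_Yj lmom_coords qcoord_def pcoord_def nmult_nth pull_nth br_nth algebra_simps)

lemma gamma_invariant_if_lmom_determined:
  assumes "\<And>z z'. (\<And>a. lmom a z = lmom a z') \<Longrightarrow> f z = f z'"
  shows "gamma_invariant f"
  unfolding gamma_invariant_def using assms lmom_left_invariant by blast

lemma gamma_invariant_theta_integral:
  assumes "a \<in> {Yi, Yj}"
  shows "gamma_invariant (theta_integral a)"
  unfolding gamma_invariant_def theta_integral_def
proof (intro ballI allI)
  fix g q p assume "g \<in> Gamma"
  then have "g $ Xj \<in> \<int>" "- g $ Xi \<in> \<int>" by (auto simp: Gamma_def)
  then show "flat_comb theta (lmom Zk (nmult g q, p), rmom a (nmult g q, p)) =
      flat_comb theta (lmom Zk (q, pull g p), rmom a (q, pull g p))"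
    using assms flat_comb_theta_periodic[of "g $ Xj"] flat_comb_theta_periodic[of "- g $ Xi"]
    by (auto simp: lmom_left_invariant rmom_Yi_left_translate rmom_Yj_left_translate)
qed

lemma gamma_invariant_first_integrals: "i < 8 \<Longrightarrow> gamma_invariant (first_integrals ! i)"
  by (drule less_8_cases, elim disjE)
    (simp_all add: first_integrals_def gamma_invariant_theta_integral gamma_invariant_if_lmom_determined
      yz_pairing_def quartic_integral_def Ham_eq)

section \<open>Independence on an open dense set\<close>

lemma flat_comb_dr_theta:
  "flat_comb (flat_dr_list theta) (t, r) =
     (if t = 0 then 0 else - 2 * pi * exp (- 1 / t\<^sup>2) * (1 / t) * sin (2 * pi * r / t))"
  by (simp add: theta_def flat_dr_list_def flat_dr_def flat_atom_def trig_def trig_sign_def)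

definition regular_set :: "phase set" where
  "regular_set = {z. lmom Zk z \<noteq> 0
     \<and> lmom Zi z * lmom Xj z - lmom Zj z * lmom Xi z \<noteq> 0
     \<and> lmom Zi z * lmom Xi z + lmom Zj z * lmom Xj z \<noteq> 0
     \<and> flat_comb (flat_dr_list theta) (lmom Zk z, rmom Yi z) \<noteq> 0
     \<and> flat_comb (flat_dr_list theta) (lmom Zk z, rmom Yj z) \<noteq> 0}"

lemma sum_less_8: "(\<Sum>i<8. f i) = f 0 + f 1 + f 2 + f 3 + f 4 + f 5 + f 6 + f (7::nat)"
  by (simp add: numeral_eq_Suc)

text \<open>Only the momentum derivatives are needed: the equations for the directions \<open>Xi, Xj\<close> involve
  only \<open>Ham\<close> and the quartic integral, those for \<open>Yk\<close>, \<open>Yi\<close>, \<open>Yj\<close> add one further integral each,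
  and the central directions then give the remaining coefficients.\<close>

lemma dp_first_integrals_independent:
  assumes e: "\<And>k. (\<Sum>i<8. c i * dp (first_integrals ! i) k z) = 0" and z: "z \<in> regular_set"
  shows "\<forall>i<8. c i = 0"
proof -
  note dp_simps = sum_less_8 first_integrals_unfold dp_rules lmom_coords rmom_Yi rmom_Yj
  define A where "A = lmom Zi z * lmom Xj z - lmom Zj z * lmom Xi z"
  define B where "B = lmom Zi z * lmom Xi z + lmom Zj z * lmom Xj z"
  have A: "A \<noteq> 0" and B: "B \<noteq> 0" and Zk: "lmom Zk z \<noteq> 0"
    and T1: "flat_comb (flat_dr_list theta) (lmom Zk z, rmom Yi z) \<noteq> 0"
    and T2: "flat_comb (flat_dr_list theta) (lmom Zk z, rmom Yj z) \<noteq> 0"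
    using z by (auto simp: regular_set_def A_def B_def)
  have EXi: "c 4 * lmom Xi z + c 5 * (2 * (lmom Zk z * lmom Zk z) * lmom Xi z - 2 * lmom Zj z * A) = 0"
    using e[of Xi] unfolding A_def by (simp add: dp_simps) algebra
  have EXj: "c 4 * lmom Xj z + c 5 * (2 * (lmom Zk z * lmom Zk z) * lmom Xj z + 2 * lmom Zi z * A) = 0"
    using e[of Xj] unfolding A_def by (simp add: dp_simps) algebra
  have "c 5 * A * B = 0"
  proof -
    have "lmom Xj z * (c 4 * lmom Xi z + c 5 * (2 * (lmom Zk z * lmom Zk z) * lmom Xi z - 2 * lmom Zj z * A))
        - lmom Xi z * (c 4 * lmom Xj z + c 5 * (2 * (lmom Zk z * lmom Zk z) * lmom Xj z + 2 * lmom Zi z * A)) = 0"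
      using EXi EXj by simp
    then show ?thesis unfolding B_def by algebra
  qed
  then have c5: "c 5 = 0" using A B by simp
  have "c 4 * lmom Xi z = 0" "c 4 * lmom Xj z = 0" using EXi EXj c5 by simp_all
  then have c4: "c 4 = 0" using B unfolding B_def by auto
  have "c 3 * lmom Zk z = 0" using e[of Yk] c4 c5 by (simp add: dp_simps)
  then have c3: "c 3 = 0" using Zk by simp
  have "c 6 * flat_comb (flat_dr_list theta) (lmom Zk z, rmom Yi z) = 0"
    using e[of Yi] c3 c4 c5 by (simp add: dp_simps)
  then have c6: "c 6 = 0" using T1 by simp
  have "c 7 * flat_comb (flat_dr_list theta) (lmom Zk z, rmom Yj z) = 0"
    using e[of Yj] c3 c4 c5 by (simp add: dp_simps)
  then have c7: "c 7 = 0" using T2 by simp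
  have "c 0 = 0" "c 1 = 0" "c 2 = 0"
    using e[of Zi] e[of Zj] e[of Zk] c3 c4 c5 c6 c7 by (simp_all add: dp_simps)
  then show ?thesis using less_8_cases c3 c4 c5 c6 c7 by blast
qed

lemma indep_diffs_first_integrals:
  assumes "z \<in> regular_set"
  shows "indep_diffs 8 (\<lambda>i. first_integrals ! i) z"
  unfolding indep_diffs_def
proof (rule allI, rule impI)
  fix c :: "nat \<Rightarrow> real"
  assume "\<forall>v. (\<Sum>i<8. c i * frechet_derivative (first_integrals ! i) (at z) v) = 0"
  then have "\<And>k. (\<Sum>i<8. c i * dp (first_integrals ! i) k z) = 0"
    unfolding dp_def by blast
  then show "\<forall>i<8. c i = 0" using dp_first_integrals_independent assms by blast
qed

lemma open_regular_set: "open regular_set"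
proof -
  have nonzero: "open {z. f z \<noteq> 0}" if "smooth_fn f" for f :: "phase \<Rightarrow> real"
    by (rule open_Collect_neq) (use that in \<open>auto intro: smooth_fn_continuous_on\<close>)
  have "regular_set = {z. lmom Zk z \<noteq> 0}
     \<inter> {z. lmom Zi z * lmom Xj z - lmom Zj z * lmom Xi z \<noteq> 0}
     \<inter> {z. lmom Zi z * lmom Xi z + lmom Zj z * lmom Xj z \<noteq> 0}
     \<inter> {z. flat_comb (flat_dr_list theta) (lmom Zk z, rmom Yi z) \<noteq> 0}
     \<inter> {z. flat_comb (flat_dr_list theta) (lmom Zk z, rmom Yj z) \<noteq> 0}"
    by (auto simp: regular_set_def)
  also have "open \<dots>"
    by (intro open_Int nonzero) (simp_all add: smooth_fn_rmom_Y)
  finally show ?thesis .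
qed

lemma exists_small_shift_sin_nonzero:
  assumes t: "t \<noteq> 0" and "\<eta> > 0"
  obtains w where "\<bar>w\<bar> < \<eta>" "sin (2 * pi * (r + w) / t) \<noteq> 0"
proof (cases "sin (2 * pi * r / t) = 0")
  case False
  then show ?thesis using that[of 0] \<open>\<eta> > 0\<close> by simp
next
  case True
  define w where "w = min (\<eta> / 2) (\<bar>t\<bar> / 4)"
  define x where "x = 2 * pi * r / t"
  define y where "y = 2 * pi * w / t"
  have "w > 0" "w < \<eta>" "w \<le> \<bar>t\<bar> / 4" using \<open>\<eta> > 0\<close> t by (auto simp: w_def)
  have "cos x \<noteq> 0" using True sin_cos_squared_add[of x] unfolding x_def by auto
  have ay: "\<bar>y\<bar> = 2 * pi * w / \<bar>t\<bar>" using \<open>w > 0\<close> by (simp add: y_def abs_mult)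
  have "sin y \<noteq> 0"
  proof
    assume "sin y = 0"
    then obtain i :: int where i: "y = of_int i * pi" using sin_zero_iff_int2 by blast
    have "\<bar>y\<bar> \<le> pi / 2"
      using \<open>w \<le> \<bar>t\<bar> / 4\<close> t unfolding ay by (simp add: divide_simps)
    moreover have "\<bar>y\<bar> > 0" using ay \<open>w > 0\<close> t by simp
    ultimately have "0 < \<bar>real_of_int i\<bar> * pi" "\<bar>real_of_int i\<bar> * pi \<le> pi / 2"
      using i by (simp_all add: abs_mult)
    then have "i \<noteq> 0" "\<bar>real_of_int i\<bar> \<le> 1 / 2" using pi_gt_zero by (auto simp: field_simps)
    then show False by linarith
  qed
  have "sin (x + y) = cos x * sin y" using True by (simp add: sin_add x_def)
  moreover have "2 * pi * (r + w) / t = x + y" by (simp add: x_def y_def add_divide_distrib distrib_left)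
  ultimately show ?thesis
    using that[of w] \<open>cos x \<noteq> 0\<close> \<open>sin y \<noteq> 0\<close> \<open>w > 0\<close> \<open>w < \<eta>\<close> by simp
qed

lemma exists_small_shift_nonzero_pair:
  fixes c1 c2 x1 x2 :: real
  assumes "c1 \<noteq> 0" "\<eta> > 0"
  obtains u v where "\<bar>u\<bar> < \<eta>" "\<bar>v\<bar> < \<eta>"
    "c1 * (x2 + v) - c2 * (x1 + u) \<noteq> 0" "c1 * (x1 + u) + c2 * (x2 + v) \<noteq> 0"
proof -
  define u where "u = (if c1 * x1 + c2 * x2 = 0 then \<eta> / 2 else 0)"
  have u: "\<bar>u\<bar> < \<eta>" using assms by (auto simp: u_def)
  define \<alpha> where "\<alpha> = c1 * x2 - c2 * (x1 + u)"
  define \<gamma> where "\<gamma> = c1 * (x1 + u) + c2 * x2"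
  have "\<gamma> = c1 * x1 + c2 * x2 + c1 * u" by (simp add: \<gamma>_def algebra_simps)
  then have "\<gamma> \<noteq> 0" using assms by (auto simp: u_def)
  have "\<exists>v. \<bar>v\<bar> < \<eta> \<and> \<alpha> + c1 * v \<noteq> 0 \<and> \<gamma> + c2 * v \<noteq> 0"
  proof (cases "\<alpha> = 0")
    case False
    then show ?thesis using \<open>\<gamma> \<noteq> 0\<close> assms by (intro exI[of _ 0]) auto
  next
    case True
    show ?thesis
    proof (cases "\<gamma> + c2 * (\<eta> / 3) = 0")
      case False
      then show ?thesis using assms True by (intro exI[of _ "\<eta> / 3"]) auto
    next
      case zero: True
      then have "\<gamma> + c2 * (2 * \<eta> / 3) = - \<gamma>" by (simp add: field_simps)
      then show ?thesis using assms True \<open>\<gamma> \<noteq> 0\<close> by (intro exI[of _ "2 * \<eta> / 3"]) auto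
    qed
  qed
  then obtain v where "\<bar>v\<bar> < \<eta>" "\<alpha> + c1 * v \<noteq> 0" "\<gamma> + c2 * v \<noteq> 0" by blast
  then show ?thesis
    using that[of u v] u by (simp add: \<alpha>_def \<gamma>_def algebra_simps)
qed

text \<open>Density is shown by perturbing only the momentum: \<open>p_Zi, p_Zk\<close> are made nonzero, then
  \<open>p_Xi, p_Xj\<close> are shifted to make the two quadratic conditions hold, and finally \<open>p_Yi, p_Yj\<close>
  are shifted to move the arguments of the sines off their zeros.\<close>

lemma exists_regular_near:
  assumes "\<epsilon> > 0"
  shows "\<exists>y\<in>regular_set. dist y z < \<epsilon>"
proof -
  obtain q p where z: "z = (q, p)" by (cases z)
  define \<eta> where "\<eta> = \<epsilon> / 8"
  have "\<eta> > 0" using assms by (simp add: \<eta>_def)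
  define c1 where "c1 = (if p $ Zi = 0 then \<eta> / 2 else p $ Zi)"
  define c3 where "c3 = (if p $ Zk = 0 then \<eta> / 2 else p $ Zk)"
  have "c1 \<noteq> 0" "c3 \<noteq> 0" "\<bar>c1 - p $ Zi\<bar> < \<eta>" "\<bar>c3 - p $ Zk\<bar> < \<eta>"
    using \<open>\<eta> > 0\<close> by (auto simp: c1_def c3_def)
  define x1 where "x1 = p $ Xi - 1/2 * q $ Yj * c3 + 1/2 * q $ Yk * p $ Zj"
  define x2 where "x2 = p $ Xj + 1/2 * q $ Yi * c3 - 1/2 * q $ Yk * c1"
  obtain u v where uv: "\<bar>u\<bar> < \<eta>" "\<bar>v\<bar> < \<eta>"
    "c1 * (x2 + v) - p $ Zj * (x1 + u) \<noteq> 0" "c1 * (x1 + u) + p $ Zj * (x2 + v) \<noteq> 0"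
    using exists_small_shift_nonzero_pair[OF \<open>c1 \<noteq> 0\<close> \<open>\<eta> > 0\<close>] by metis
  define r1 where "r1 = p $ Yi + 1/2 * q $ Xj * c3"
  define r2 where "r2 = p $ Yj - 1/2 * q $ Xi * c3"
  obtain w1 where w1: "\<bar>w1\<bar> < \<eta>" "sin (2 * pi * (r1 + w1) / c3) \<noteq> 0"
    using exists_small_shift_sin_nonzero[OF \<open>c3 \<noteq> 0\<close> \<open>\<eta> > 0\<close>] by metis
  obtain w2 where w2: "\<bar>w2\<bar> < \<eta>" "sin (2 * pi * (r2 + w2) / c3) \<noteq> 0"
    using exists_small_shift_sin_nonzero[OF \<open>c3 \<noteq> 0\<close> \<open>\<eta> > 0\<close>] by metis
  define d :: vec8 where "d = (\<chi> k. case k of Zi \<Rightarrow> c1 - p $ Zi | Zk \<Rightarrow> c3 - p $ Zk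
    | Xi \<Rightarrow> u | Xj \<Rightarrow> v | Yi \<Rightarrow> w1 | Yj \<Rightarrow> w2 | _ \<Rightarrow> 0)"
  define y where "y = (q, p + d)"
  have "lmom Zi y = c1" "lmom Zj y = p $ Zj" "lmom Zk y = c3"
    "lmom Xi y = x1 + u" "lmom Xj y = x2 + v" "rmom Yi y = r1 + w1" "rmom Yj y = r2 + w2"
    by (simp_all add: y_def d_def lmom_coords rmom_Yi rmom_Yj pcoord_def qcoord_def x1_def x2_def
      r1_def r2_def)
  then have "y \<in> regular_set"
    using uv w1 w2 \<open>c3 \<noteq> 0\<close> by (simp add: regular_set_def flat_comb_dr_theta algebra_simps)
  moreover have "dist y z < \<epsilon>"
  proof -
    have "dist y z = norm d" by (simp add: y_def z dist_Pair_Pair dist_norm)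
    also have "\<dots> \<le> (\<Sum>k\<in>UNIV. \<bar>d $ k\<bar>)" by (rule norm_le_l1_cart)
    also have "\<dots> < 6 * \<eta>"
      using uv w1 w2 \<open>\<bar>c1 - p $ Zi\<bar> < \<eta>\<close> \<open>\<bar>c3 - p $ Zk\<bar> < \<eta>\<close> by (simp add: sum_UNIV_idx d_def)
    finally show ?thesis using assms by (simp add: \<eta>_def)
  qed
  ultimately show ?thesis by blast
qed

lemma closure_regular_set: "closure regular_set = UNIV"
  using exists_regular_near by (auto simp: closure_approachable)

theorem corollary3p3:
  shows "geodesic_flow_completely_integrable"
proof -
  have card: "CARD(idx) = 8" by (simp add: UNIV_idx)
  have Ham: "Ham = first_integrals ! 4" by (simp add: first_integrals_def)
  show ?thesis
    unfolding geodesic_flow_completely_integrable_def card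
  proof (intro exI[of _ "\<lambda>i. first_integrals ! i"] conjI allI impI)
    fix i j :: nat and z assume i: "i < 8"
    show "smooth_fn (first_integrals ! i)" using smooth_fn_first_integrals[OF i] .
    show "gamma_invariant (first_integrals ! i)" using gamma_invariant_first_integrals[OF i] .
    show "poisson (first_integrals ! i) Ham z = 0"
      unfolding Ham by (rule poisson_first_integrals[OF i]) simp
    show "j < 8 \<Longrightarrow> poisson (first_integrals ! i) (first_integrals ! j) z = 0"
      by (rule poisson_first_integrals[OF i])
  next
    show "\<exists>U. open U \<and> closure U = UNIV \<and> (\<forall>z\<in>U. indep_diffs 8 (\<lambda>i. first_integrals ! i) z)"
      using open_regular_set closure_regular_set indep_diffs_first_integrals by blast
  qed
qed

end
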